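(* Let $S\subset\mathbb{R}^2$ be a set of $n>4$ points in general position. Then there exists a Radon partition $P$ of $S$ whose degree in the Radon partition graph $G_T[S,2]$ is exactly $n-3$.
   Context: A Radon partition of a finite set $S\subset\mathbb{R}^d$ is a partition of $S$ into two nonempty disjoint parts $P_1,P_2$ (unordered) with $\operatorname{conv}(P_1)\cap\operatorname{conv}(P_2)\neq\emptyset$. For two partitions $P,P'$ of $S$, the partition distance $D(P,P')$ is the minimum number of elements of $S$ that must be removed so that $P$ and $P'$ restricted to the remaining elements coincide. The Radon partition graph $G_T[S,2]$ has as vertices all Radon partitions of $S$, with an edge between $P$ and $P'$ if and only if $D(P,P')=1$. *)

theory Defs
  imports "HOL-Analysis.Analysis"
begin

text \<open>Points of the plane are vectors of type real^2. A partition of S into two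
 parts is represented as the unordered set of its blocks.\<close>

definition general_position_2d :: "(real^2) set \<Rightarrow> bool" where
  "general_position_2d S \<longleftrightarrow> (\<forall>T \<subseteq> S. card T = 3 \<longrightarrow> \<not> collinear T)"

definition two_partitions :: "'a set \<Rightarrow> 'a set set set" where
  "two_partitions S = {{A, S - A} | A. A \<subseteq> S \<and> A \<noteq> {} \<and> S - A \<noteq> {}}"

definition radon_partitions :: "(real^2) set \<Rightarrow> (real^2) set set set" where
  "radon_partitions S = {P \<in> two_partitions S.
      \<exists>A B. P = {A, B} \<and> convex hull A \<inter> convex hull B \<noteq> {}}"

definition restrict_partition :: "'a set set \<Rightarrow> 'a set \<Rightarrow> 'a set set" where
  "restrict_partition P T = (\<lambda>B. B \<inter> T) ` P - {{}}"

definition partition_distance :: "'a set \<Rightarrow> 'a set set \<Rightarrow> 'a set set \<Rightarrow> nat" where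
  "partition_distance S P P' = (LEAST k. \<exists>R \<subseteq> S. card R = k \<and>
      restrict_partition P (S - R) = restrict_partition P' (S - R))"

definition radon_graph_degree :: "(real^2) set \<Rightarrow> (real^2) set set \<Rightarrow> nat" where
  "radon_graph_degree S P = card {P' \<in> radon_partitions S. partition_distance S P P' = 1}"

end

theory Submission
  imports Defs
begin

text \<open>Fix a point l of S and, among the lines through two further points of S, let xy be one
  nearest to l, distances being measured along a direction in which no two points of S line
  up. Then every point z outside the triangle T = {l, x, y} lies above all three side lines
  of T or below all three: otherwise the line through z and x or y would be nearer to l.
  Let A contain the points off T lying above, and each vertex lying below its opposite side.
  Moving a vertex to the other part gives a partition separated by a slight perturbation of the
  line through the other two vertices. Moving any other point w keeps the partition Radon:
  since n > 4 there is a fourth point e \<noteq> w off T, and a Radon partition of T \<union> {e} must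
  split T as A does, every other split being separable.\<close>

section \<open>Moving one point across a bipartition\<close>

lemma exists_third_element:
  assumes "finite S" "card S \<ge> 3"
  obtains z where "z \<in> S" "z \<noteq> a" "z \<noteq> b"
proof -
  have "\<not> S \<subseteq> {a, b}"
  proof
    assume "S \<subseteq> {a, b}"
    then have "card S \<le> card {a, b}"
      by (intro card_mono) auto
    also have "\<dots> \<le> 2"
      by (cases "a = b") auto
    finally show False
      using assms(2) by simp
  qed
  then show thesis
    using that by blast
qed

definition toggle :: "'a set \<Rightarrow> 'a \<Rightarrow> 'a set" where
  "toggle A w = (if w \<in> A then A - {w} else insert w A)"

lemma mem_toggle_iff [simp]: "z \<in> toggle A w \<longleftrightarrow> (z \<in> A \<longleftrightarrow> z \<noteq> w)"
  by (auto simp: toggle_def)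

lemma Diff_toggle: "w \<in> S \<Longrightarrow> S - toggle A w = toggle (S - A) w"
  by auto

lemma eq_or_toggle_if_agree_off:
  assumes "B \<subseteq> S" "C \<subseteq> S" "B \<inter> (S - {w}) = C \<inter> (S - {w})"
  shows "B = C \<or> B = toggle C w"
  using assms by (cases "w \<in> B \<longleftrightarrow> w \<in> C") (auto simp: set_eq_iff)

lemma restrict_bipartition_cases:
  assumes "A \<subseteq> S" "B \<subseteq> S" "T \<subseteq> S"
    and "restrict_partition {A, S - A} T = restrict_partition {B, S - B} T"
  shows "B \<inter> T = A \<inter> T \<or> B \<inter> T = (S - A) \<inter> T"
proof (cases "B \<inter> T = {}")
  case True
  then have "T \<in> restrict_partition {B, S - B} T \<or> T = {}"
    using assms(3) by (auto simp: restrict_partition_def)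
  then have "T \<in> restrict_partition {A, S - A} T \<or> T = {}"
    using assms(4) by simp
  then show ?thesis
    using True by (auto simp: restrict_partition_def)
next
  case False
  then have "B \<inter> T \<in> restrict_partition {B, S - B} T"
    by (simp add: restrict_partition_def)
  then show ?thesis
    unfolding assms(4)[symmetric] by (auto simp: restrict_partition_def)
qed

lemma partition_distance_witness:
  assumes "finite S"
  shows "\<exists>R\<subseteq>S. card R = partition_distance S P P' \<and>
           restrict_partition P (S - R) = restrict_partition P' (S - R)"
  unfolding partition_distance_def
proof (rule LeastI)
  show "\<exists>R\<subseteq>S. card R = card S \<and> restrict_partition P (S - R) = restrict_partition P' (S - R)"
    by (rule exI[of _ S]) (auto simp: restrict_partition_def)
qed

lemma partition_distance_eq_0_iff:
  assumes "finite S"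
  shows "partition_distance S P P' = 0 \<longleftrightarrow> restrict_partition P S = restrict_partition P' S"
proof
  assume "partition_distance S P P' = 0"
  then obtain R where "R \<subseteq> S" "card R = 0" "restrict_partition P (S - R) = restrict_partition P' (S - R)"
    using partition_distance_witness[OF assms] by metis
  moreover from this have "R = {}"
    using assms finite_subset card_0_eq by metis
  ultimately show "restrict_partition P S = restrict_partition P' S"
    by simp
next
  assume "restrict_partition P S = restrict_partition P' S"
  then show "partition_distance S P P' = 0"
    unfolding partition_distance_def by (intro Least_eq_0 exI[of _ "{}"]) simp
qed

lemma partition_distance_toggle:
  assumes "finite S" "A \<subseteq> S" "w \<in> S" "S - {w} \<noteq> {}"
  shows "partition_distance S {A, S - A} {toggle A w, S - toggle A w} = 1"
proof -
  have "partition_distance S {A, S - A} {toggle A w, S - toggle A w} \<le> 1"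
    unfolding partition_distance_def
    by (rule Least_le, rule exI[of _ "{w}"]) (use assms(3) in \<open>auto simp: restrict_partition_def\<close>)
  moreover
  obtain z where z: "z \<in> S" "z \<noteq> w"
    using assms(4) by blast
  have "restrict_partition {A, S - A} S \<noteq> restrict_partition {toggle A w, S - toggle A w} S"
  proof
    assume eq: "restrict_partition {A, S - A} S = restrict_partition {toggle A w, S - toggle A w} S"
    have "toggle A w \<inter> S = A \<inter> S \<or> toggle A w \<inter> S = (S - A) \<inter> S"
      by (rule restrict_bipartition_cases) (use assms eq in auto)
    then show False
      using z assms(3) by (auto simp: set_eq_iff)
  qed
  then have "partition_distance S {A, S - A} {toggle A w, S - toggle A w} \<noteq> 0"
    using partition_distance_eq_0_iff[OF assms(1)] by blast
  ultimately show ?thesis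
    by linarith
qed

lemma partition_distance_eq_1_imp_toggle:
  assumes "finite S" "A \<subseteq> S" "B \<subseteq> S"
    and "partition_distance S {A, S - A} {B, S - B} = 1"
  obtains w where "w \<in> S" "{B, S - B} = {toggle A w, S - toggle A w}"
proof -
  obtain R where R: "R \<subseteq> S" "card R = 1"
    "restrict_partition {A, S - A} (S - R) = restrict_partition {B, S - B} (S - R)"
    using partition_distance_witness[OF assms(1)] assms(4) by metis
  then obtain w where w: "R = {w}" "w \<in> S"
    by (auto simp: card_1_singleton_iff)
  have ne: "restrict_partition {A, S - A} S \<noteq> restrict_partition {B, S - B} S"
    using partition_distance_eq_0_iff[OF assms(1), of "{A, S - A}" "{B, S - B}"] assms(4) by simp
  have "B \<inter> (S - {w}) = A \<inter> (S - {w}) \<or> B \<inter> (S - {w}) = (S - A) \<inter> (S - {w})"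
    by (rule restrict_bipartition_cases) (use assms R w in auto)
  then have "B = A \<or> B = toggle A w \<or> B = S - A \<or> B = toggle (S - A) w"
    using eq_or_toggle_if_agree_off[of B S _ w] assms(2,3) by blast
  moreover have "B \<noteq> A"
    using ne by auto
  moreover have "B \<noteq> S - A"
  proof
    assume "B = S - A"
    then have "{B, S - B} = {A, S - A}"
      using assms(2) by (auto simp: double_diff)
    with ne show False
      by simp
  qed
  ultimately have "B = toggle A w \<or> B = S - toggle A w"
    by (simp add: Diff_toggle[OF w(2)])
  moreover have "S - (S - toggle A w) = toggle A w"
    using assms(2) w(2) by auto
  ultimately have "{B, S - B} = {toggle A w, S - toggle A w}"
    by auto
  with w(2) show thesis
    by (rule that)
qed

lemma inj_on_toggle_bipartition:
  assumes "finite S" "card S \<ge> 3"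
  shows "inj_on (\<lambda>w. {toggle A w, S - toggle A w}) S"
proof
  fix w w' assume w: "w \<in> S" "w' \<in> S"
    and eq: "{toggle A w, S - toggle A w} = {toggle A w', S - toggle A w'}"
  obtain z where z: "z \<in> S" "z \<noteq> w" "z \<noteq> w'"
    using exists_third_element[OF assms] .
  show "w = w'"
  proof (rule ccontr)
    assume "w \<noteq> w'"
    then have "toggle A w \<noteq> toggle A w'"
      by (auto simp: set_eq_iff)
    then have "toggle A w = S - toggle A w'"
      using eq by (metis doubleton_eq_iff)
    then show False
      using z by (auto simp: set_eq_iff)
  qed
qed

lemma bipartition_in_radon_partitions:
  assumes "A \<subseteq> S" "convex hull A \<inter> convex hull (S - A) \<noteq> {}"
  shows "{A, S - A} \<in> radon_partitions S"
proof -
  have "A \<noteq> {}" "S - A \<noteq> {}"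
    using assms(2) by (metis convex_hull_empty inf_bot_left inf_bot_right)+
  then show ?thesis
    using assms unfolding radon_partitions_def two_partitions_def by blast
qed

lemma radon_graph_degree_bipartition:
  assumes "finite S" "card S \<ge> 3" "A \<subseteq> S"
  shows "radon_graph_degree S {A, S - A} =
           card {w \<in> S. convex hull (toggle A w) \<inter> convex hull (S - toggle A w) \<noteq> {}}"
proof -
  let ?flip = "\<lambda>w. {toggle A w, S - toggle A w}"
  let ?W = "{w \<in> S. convex hull (toggle A w) \<inter> convex hull (S - toggle A w) \<noteq> {}}"
  have not_singleton: "S - {w} \<noteq> {}" for w
    using exists_third_element[OF assms(1,2), of w w] by blast
  have dist: "partition_distance S {A, S - A} (?flip w) = 1" if "w \<in> S" for w
    using partition_distance_toggle[OF assms(1,3) that not_singleton] .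
  have "{P' \<in> radon_partitions S. partition_distance S {A, S - A} P' = 1} = ?flip ` ?W"
  proof (intro equalityI subsetI)
    fix P' assume P': "P' \<in> {P' \<in> radon_partitions S. partition_distance S {A, S - A} P' = 1}"
    then have "P' \<in> two_partitions S"
      by (simp add: radon_partitions_def)
    then obtain B where B: "P' = {B, S - B}" "B \<subseteq> S"
      by (auto simp: two_partitions_def)
    obtain w where "w \<in> S" "{B, S - B} = ?flip w"
      by (rule partition_distance_eq_1_imp_toggle[OF assms(1,3) B(2)]) (use P' B(1) in simp)
    with B(1) have w: "w \<in> S" "P' = ?flip w"
      by simp_all
    obtain X Y where XY: "P' = {X, Y}" "convex hull X \<inter> convex hull Y \<noteq> {}"
      using P' by (auto simp: radon_partitions_def)
    have "convex hull (toggle A w) \<inter> convex hull (S - toggle A w) \<noteq> {}"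
      using XY w(2) by (auto simp: doubleton_eq_iff Int_commute)
    with w show "P' \<in> ?flip ` ?W"
      by blast
  next
    fix P' assume "P' \<in> ?flip ` ?W"
    then obtain w where w: "w \<in> S" "P' = ?flip w"
      and meet: "convex hull (toggle A w) \<inter> convex hull (S - toggle A w) \<noteq> {}"
      by blast
    have "toggle A w \<subseteq> S"
      using assms(3) w(1) by auto
    then have "P' \<in> radon_partitions S"
      using bipartition_in_radon_partitions meet w(2) by simp
    with dist w show "P' \<in> {P' \<in> radon_partitions S. partition_distance S {A, S - A} P' = 1}"
      by simp
  qed
  moreover have "inj_on ?flip ?W"
    by (rule inj_on_subset[OF inj_on_toggle_bipartition[OF assms(1,2)]]) auto
  ultimately show ?thesis
    unfolding radon_graph_degree_def by (simp add: card_image)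
qed

section \<open>Separation by a tilted line\<close>

lemma convex_hulls_meet_mono:
  assumes "convex hull M \<inter> convex hull N \<noteq> {}" "M \<subseteq> X" "N \<subseteq> Y"
  shows "convex hull X \<inter> convex hull Y \<noteq> {}"
  using assms hull_mono by blast

lemma convex_hulls_disjoint_if_separated:
  fixes a :: "'a::real_inner"
  assumes "\<forall>z\<in>X. a \<bullet> z > b" "\<forall>z\<in>Y. a \<bullet> z < b"
  shows "convex hull X \<inter> convex hull Y = {}"
proof -
  have "convex hull X \<subseteq> {z. a \<bullet> z > b}"
    by (rule hull_minimal) (use assms convex_halfspace_gt in auto)
  moreover have "convex hull Y \<subseteq> {z. a \<bullet> z < b}"
    by (rule hull_minimal) (use assms convex_halfspace_lt in auto)
  ultimately show ?thesis
    by fastforce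
qed

lemma exists_small_perturbation:
  assumes "finite Z" "\<forall>z\<in>Z. g z \<noteq> 0"
  obtains \<epsilon> :: real where "\<epsilon> > 0" "\<forall>z\<in>Z. \<epsilon> * \<bar>h z\<bar> < \<bar>g z\<bar>"
proof -
  have "\<forall>\<^sub>F \<epsilon> in at_right 0. \<forall>z\<in>Z. \<epsilon> * \<bar>h z\<bar> < \<bar>g z\<bar>"
  proof (rule eventually_ball_finite[OF assms(1)], rule ballI)
    fix z assume "z \<in> Z"
    have "((\<lambda>\<epsilon>. \<epsilon> * \<bar>h z\<bar>) \<longlongrightarrow> 0 * \<bar>h z\<bar>) (at_right 0)"
      by (intro tendsto_intros tendsto_ident_at)
    then show "\<forall>\<^sub>F \<epsilon> in at_right 0. \<epsilon> * \<bar>h z\<bar> < \<bar>g z\<bar>"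
      using \<open>z \<in> Z\<close> assms(2) by (intro order_tendstoD) auto
  qed
  then obtain b where "b > 0" "\<forall>\<epsilon>>0. \<epsilon> < b \<longrightarrow> (\<forall>z\<in>Z. \<epsilon> * \<bar>h z\<bar> < \<bar>g z\<bar>)"
    by (auto simp: eventually_at_right_field)
  moreover have "b / 2 > 0" "b / 2 < b"
    using \<open>b > 0\<close> by auto
  ultimately show thesis
    using that by blast
qed

text \<open>Adding to f a small multiple of an affine function that is \<plusminus>1 at p and q moves p and q
  to the prescribed sides of the line f = 0 without moving any other point of S across it.\<close>
lemma convex_hulls_disjoint_tilting_line:
  fixes S :: "'a::real_inner set"
  assumes "finite S" "B \<subseteq> S" "p \<noteq> q"
    and f: "\<And>z. f z = a \<bullet> z + b" "f p = 0" "f q = 0"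
    and sides: "\<forall>z\<in>S - {p, q}. f z \<noteq> 0 \<and> (z \<in> B \<longleftrightarrow> f z > 0)"
  shows "convex hull B \<inter> convex hull (S - B) = {}"
proof -
  define \<sigma> where "\<sigma> z = (if z \<in> B then 1 else - 1 :: real)" for z
  define k where "k = (\<sigma> q - \<sigma> p) / ((q - p) \<bullet> (q - p))"
  define h where "h z = \<sigma> p + k * ((z - p) \<bullet> (q - p))" for z
  have "(q - p) \<bullet> (q - p) \<noteq> 0"
    using assms(3) by simp
  then have h_pq: "h p = \<sigma> p" "h q = \<sigma> q"
    by (simp_all add: h_def k_def)
  obtain \<epsilon> :: real where \<epsilon>: "\<epsilon> > 0" "\<forall>z\<in>S - {p, q}. \<epsilon> * \<bar>h z\<bar> < \<bar>f z\<bar>"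
    using exists_small_perturbation[of "S - {p, q}" f] assms(1) sides by blast
  have side: "if z \<in> B then f z + \<epsilon> * h z > 0 else f z + \<epsilon> * h z < 0"
    if "z \<in> S" for z
  proof (cases "z \<in> {p, q}")
    case True
    then show ?thesis
      using f h_pq \<epsilon>(1) by (auto simp: \<sigma>_def split: if_splits)
  next
    case False
    then have "\<bar>\<epsilon> * h z\<bar> < \<bar>f z\<bar>" "f z \<noteq> 0" "z \<in> B \<longleftrightarrow> f z > 0"
      using \<epsilon> sides that by (auto simp: abs_mult)
    then show ?thesis
      by auto
  qed
  define a' where "a' = a + (\<epsilon> * k) *\<^sub>R (q - p)"
  define b' where "b' = b + \<epsilon> * \<sigma> p - \<epsilon> * k * (p \<bullet> (q - p))"
  have "f z + \<epsilon> * h z = a' \<bullet> z + b'" for z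
    by (simp add: a'_def b'_def f h_def inner_add_left inner_diff_left inner_commute algebra_simps)
  then have "\<forall>z\<in>B. a' \<bullet> z > - b'" "\<forall>z\<in>S - B. a' \<bullet> z < - b'"
    using side assms(2) by (fastforce split: if_splits)+
  then show ?thesis
    by (rule convex_hulls_disjoint_if_separated)
qed

section \<open>Heights over lines in a sheared frame\<close>

text \<open>Heights are measured in the sheared frame (abscissa c z, z$2); choosing c so that
  abscissa c is injective on S makes every line through two points of S non-vertical.\<close>
definition abscissa :: "real \<Rightarrow> real^2 \<Rightarrow> real" where
  "abscissa c z = z$1 + c * z$2"

definition slope :: "real \<Rightarrow> real^2 \<Rightarrow> real^2 \<Rightarrow> real" where
  "slope c p q = (q$2 - p$2) / (abscissa c q - abscissa c p)"

definition height_over :: "real \<Rightarrow> real^2 \<Rightarrow> real \<Rightarrow> real^2 \<Rightarrow> real" where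
  "height_over c p s z = z$2 - p$2 - s * (abscissa c z - abscissa c p)"

definition line_height :: "real \<Rightarrow> real^2 \<Rightarrow> real^2 \<Rightarrow> real^2 \<Rightarrow> real" where
  "line_height c p q = height_over c p (slope c p q)"

lemma line_height_left [simp]: "line_height c p q p = 0"
  by (simp add: line_height_def height_over_def)

lemma line_height_right:
  "abscissa c p \<noteq> abscissa c q \<Longrightarrow> line_height c p q q = 0"
  by (simp add: line_height_def height_over_def slope_def)

lemma height_over_eq_slope_diff:
  "abscissa c p \<noteq> abscissa c z \<Longrightarrow>
     height_over c p s z = (abscissa c z - abscissa c p) * (slope c p z - s)"
  by (simp add: height_over_def slope_def field_simps)

lemma line_height_commute:
  assumes "abscissa c p \<noteq> abscissa c q"
  shows "line_height c q p = line_height c p q"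
proof -
  have "slope c q p = slope c p q"
    unfolding slope_def by (metis minus_diff_eq minus_divide_divide)
  moreover have "q$2 - p$2 = slope c p q * (abscissa c q - abscissa c p)"
    using assms by (simp add: slope_def)
  ultimately show ?thesis
    by (simp add: fun_eq_iff line_height_def height_over_def algebra_simps)
qed

lemma height_over_affine:
  "height_over c p s z = vector [- s, 1 - s * c] \<bullet> z + (s * abscissa c p - p$2)"
  by (simp add: height_over_def abscissa_def inner_vec_def sum_2 vector_2 algebra_simps)

lemma collinear_if_line_height_eq_0:
  assumes "abscissa c p \<noteq> abscissa c q" "line_height c p q z = 0"
  shows "collinear {p, q, z}"
proof -
  define t where "t = (abscissa c z - abscissa c p) / (abscissa c q - abscissa c p)"
  have d: "abscissa c q - abscissa c p \<noteq> 0"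
    using assms(1) by simp
  have 2: "z$2 - p$2 = t * (q$2 - p$2)"
    using assms(2) d by (simp add: line_height_def height_over_def slope_def t_def field_simps)
  have "z$1 - p$1 = (abscissa c z - abscissa c p) - c * (z$2 - p$2)"
    by (simp add: abscissa_def algebra_simps)
  also have "\<dots> = t * (abscissa c q - abscissa c p) - c * (t * (q$2 - p$2))"
    using d 2 by (simp add: t_def)
  also have "\<dots> = t * (q$1 - p$1)"
    by (simp add: abscissa_def algebra_simps)
  finally have "z$1 - p$1 = t * (q$1 - p$1)" .
  with 2 have "z = t *\<^sub>R q + (1 - t) *\<^sub>R p"
    by (simp add: vec_eq_iff forall_2 algebra_simps)
  then have "collinear {q, z, p}"
    by (auto simp: collinear_3_expand)
  then show ?thesis
    by (simp add: insert_commute)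
qed

lemma exists_inj_on_abscissa:
  assumes "finite S"
  obtains c where "inj_on (abscissa c) S"
proof -
  define bad where "bad = (\<lambda>(p, q). (q$1 - p$1) / (p$2 - q$2)) ` (S \<times> S)"
  have "finite bad"
    using assms by (simp add: bad_def)
  then obtain c where c: "c \<notin> bad"
    using ex_new_if_finite[OF infinite_UNIV_char_0] by blast
  have "p = q" if "p \<in> S" "q \<in> S" "abscissa c p = abscissa c q" for p q
  proof (cases "p$2 = q$2")
    case True
    with that(3) show ?thesis
      by (simp add: abscissa_def vec_eq_iff forall_2)
  next
    case False
    with that(3) have "c = (q$1 - p$1) / (p$2 - q$2)"
      by (simp add: abscissa_def field_simps)
    with c that(1,2) show ?thesis
      by (force simp: bad_def)
  qed
  then show thesis
    by (intro that inj_onI)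
qed

lemma line_height_nonzero:
  assumes "general_position_2d S" "inj_on (abscissa c) S"
    and "p \<in> S" "q \<in> S" "z \<in> S" "p \<noteq> q" "z \<noteq> p" "z \<noteq> q"
  shows "line_height c p q z \<noteq> 0"
proof
  assume "line_height c p q z = 0"
  then have "collinear {p, q, z}"
    using assms(2-4,6) collinear_if_line_height_eq_0 inj_on_contraD by metis
  moreover have "{p, q, z} \<subseteq> S" "card {p, q, z} = 3"
    using assms(3-8) by auto
  ultimately show False
    using assms(1) unfolding general_position_2d_def by blast
qed

lemma same_sign_of_nearer_slope:
  fixes d s t u :: real
  assumes "\<bar>u - s\<bar> \<le> \<bar>u - t\<bar>" "t \<noteq> s"
  shows "d * (t - s) > 0 \<longleftrightarrow> d * (t - u) > 0"
proof -
  have "(t - s) * (t - u) > 0"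
  proof (rule ccontr)
    assume "\<not> (t - s) * (t - u) > 0"
    then have "(s \<le> t \<and> t \<le> u) \<or> (u \<le> t \<and> t \<le> s)"
      by (auto simp: not_less mult_le_0_iff)
    then show False
      using assms by auto
  qed
  then show ?thesis
    by (auto simp: zero_less_mult_iff)
qed

text \<open>Nearness of xy to l forces the slope of xz not to lie between those of xl and xy.\<close>
lemma nearest_line_same_side:
  assumes "general_position_2d S" "inj_on (abscissa c) S"
    and "x \<in> S" "y \<in> S" "z \<in> S" "l \<in> S" "distinct [x, y, z, l]"
    and nearest: "\<bar>line_height c x y l\<bar> \<le> \<bar>line_height c x z l\<bar>"
  shows "line_height c x y z > 0 \<longleftrightarrow> line_height c x l z > 0"
proof -
  have ne: "abscissa c x \<noteq> abscissa c w" if "w \<in> {y, z, l}" for w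
    using assms(2-7) that inj_on_contraD by fastforce
  have heights: "line_height c x w v = (abscissa c v - abscissa c x) * (slope c x v - slope c x w)"
    if "v \<in> {y, z, l}" for v w
    using ne[OF that] by (simp add: line_height_def height_over_eq_slope_diff)
  have "line_height c x y z \<noteq> 0"
    using line_height_nonzero[OF assms(1-5)] assms(7) by auto
  then have "slope c x z \<noteq> slope c x y"
    using heights[of z y] by auto
  moreover have "\<bar>slope c x l - slope c x y\<bar> \<le> \<bar>slope c x l - slope c x z\<bar>"
    using nearest ne[of l] heights[of l y] heights[of l z] by (simp add: abs_mult)
  ultimately have "(abscissa c z - abscissa c x) * (slope c x z - slope c x y) > 0 \<longleftrightarrow>
      (abscissa c z - abscissa c x) * (slope c x z - slope c x l) > 0"
    by (rule same_sign_of_nearer_slope[rotated])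
  then show ?thesis
    using heights[of z y] heights[of z l] by simp
qed

section \<open>Triangles with every other point on one side of all its sides\<close>

locale triangle_config =
  fixes S T :: "(real^2) set" and f :: "real^2 \<Rightarrow> real^2 \<Rightarrow> real"
  assumes finite_S: "finite S" and T_subset: "T \<subseteq> S" and card_T: "card T = 3"
    and affine: "\<And>v. v \<in> T \<Longrightarrow> \<exists>a b. \<forall>z. f v z = a \<bullet> z + b"
    and vanishes: "\<And>v w. v \<in> T \<Longrightarrow> w \<in> T - {v} \<Longrightarrow> f v w = 0"
    and nonzero: "\<And>v z. v \<in> T \<Longrightarrow> z \<in> S - (T - {v}) \<Longrightarrow> f v z \<noteq> 0"
    and same_side: "\<And>v w z. v \<in> T \<Longrightarrow> w \<in> T \<Longrightarrow> z \<in> S - T \<Longrightarrow> f v z > 0 \<longleftrightarrow> f w z > 0"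
begin

definition A :: "(real^2) set" where
  "A = {z \<in> S. if z \<in> T then f z z < 0 else (\<forall>v\<in>T. f v z > 0)}"

lemma A_subset: "A \<subseteq> S"
  by (auto simp: A_def)

lemma mem_A_vertex: "v \<in> T \<Longrightarrow> v \<in> A \<longleftrightarrow> f v v < 0"
  using T_subset by (auto simp: A_def)

lemma mem_A_off_T:
  assumes "v \<in> T" "z \<in> S - T"
  shows "z \<in> A \<longleftrightarrow> f v z > 0"
proof -
  have "z \<in> A \<longleftrightarrow> (\<forall>u\<in>T. f u z > 0)"
    using assms(2) by (simp add: A_def)
  also have "\<dots> \<longleftrightarrow> f v z > 0"
    using assms same_side[of _ v z] by blast
  finally show ?thesis .
qed

lemma separated_if_differs_on_T:
  assumes "B \<subseteq> S" "B - T = A - T" "B \<inter> T \<noteq> A \<inter> T"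
  shows "convex hull B \<inter> convex hull (S - B) = {}"
proof -
  have "\<exists>v\<in>T. v \<in> B \<longleftrightarrow> v \<notin> A"
    using assms(3) by auto
  then obtain v where v: "v \<in> T" "v \<in> B \<longleftrightarrow> v \<notin> A"
    by blast
  have "card (T - {v}) = 2"
    using card_T v(1) by simp
  then obtain p q where pq: "T - {v} = {p, q}" "p \<noteq> q"
    by (auto simp: card_2_iff)
  obtain a b where ab: "\<And>z. f v z = a \<bullet> z + b"
    using affine[OF v(1)] by blast
  have on_line: "f v p = 0" "f v q = 0"
    using vanishes[OF v(1)] pq(1) by auto
  have sides: "\<forall>z\<in>S - {p, q}. f v z \<noteq> 0 \<and> (z \<in> B \<longleftrightarrow> f v z > 0)"
  proof
    fix z assume z: "z \<in> S - {p, q}"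
    then have nz: "f v z \<noteq> 0"
      using nonzero[OF v(1)] pq(1) by auto
    moreover have "z \<in> B \<longleftrightarrow> f v z > 0"
    proof (cases "z \<in> T")
      case True
      then have "z = v"
        using z pq(1) by auto
      then show ?thesis
        using v mem_A_vertex nz by auto
    next
      case False
      then have "z \<in> B \<longleftrightarrow> z \<in> A"
        using assms(2) by (auto simp: set_eq_iff)
      then show ?thesis
        using mem_A_off_T[OF v(1)] z False by auto
    qed
    ultimately show "f v z \<noteq> 0 \<and> (z \<in> B \<longleftrightarrow> f v z > 0)"
      by blast
  qed
  show ?thesis
    by (rule convex_hulls_disjoint_tilting_line[where f = "f v", OF finite_S assms(1) pq(2) ab on_line sides])
qed

lemma hulls_meet_if_agrees:
  assumes "B \<subseteq> S" "e \<in> S - T" "B \<inter> insert e T = A \<inter> insert e T"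
  shows "convex hull B \<inter> convex hull (S - B) \<noteq> {}"
proof -
  have finite: "finite (insert e T)"
    using card_T by (simp add: card_ge_0_finite)
  moreover have "card (insert e T) = 4"
    using card_T assms(2) finite by simp
  ultimately have "affine_dependent (insert e T)"
    by (intro affine_dependent_biggerset[OF finite]) simp
  then obtain M0 N0 where MN0: "M0 \<inter> N0 = {}" "M0 \<union> N0 = insert e T"
      "convex hull M0 \<inter> convex hull N0 \<noteq> {}"
    using Radon_partition[OF finite] by blast
  obtain M N where MN: "M \<inter> N = {}" "M \<union> N = insert e T"
      "convex hull M \<inter> convex hull N \<noteq> {}" "e \<in> M \<longleftrightarrow> e \<in> B"
  proof (cases "e \<in> M0 \<longleftrightarrow> e \<in> B")
    case True
    with MN0 show thesis
      by (intro that[of M0 N0])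
  next
    case False
    then have "e \<in> N0 \<longleftrightarrow> e \<in> B"
      using MN0(1,2) by blast
    with MN0 show thesis
      by (intro that[of N0 M0]) (auto simp: Int_commute Un_commute)
  qed
  define D where "D = (M \<inter> T) \<union> (A - T)"
  have "M \<subseteq> D" "N \<subseteq> S - D"
    using MN assms T_subset by (auto simp: D_def set_eq_iff)
  then have "convex hull D \<inter> convex hull (S - D) \<noteq> {}"
    by (rule convex_hulls_meet_mono[OF MN(3)])
  moreover have "D \<subseteq> S" "D - T = A - T"
    using A_subset T_subset by (auto simp: D_def)
  ultimately have "D \<inter> T = A \<inter> T"
    using separated_if_differs_on_T by blast
  moreover have "D \<inter> T = M \<inter> T" "A \<inter> T = B \<inter> T"
    using assms(3) by (auto simp: D_def)
  ultimately have MT: "M \<inter> T = B \<inter> T"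
    by simp
  have "M \<subseteq> B"
  proof
    fix x assume "x \<in> M"
    then have "x = e \<or> x \<in> M \<inter> T"
      using MN(2) by blast
    with \<open>x \<in> M\<close> show "x \<in> B"
      using MN(4) MT by blast
  qed
  moreover have "N \<subseteq> S - B"
  proof
    fix x assume x: "x \<in> N"
    then have "x \<notin> M" "x \<in> insert e T"
      using MN(1,2) by blast+
    then show "x \<in> S - B"
      using MN(4) MT assms(2) T_subset by blast
  qed
  ultimately show ?thesis
    by (rule convex_hulls_meet_mono[OF MN(3)])
qed

theorem exists_radon_partition_of_degree:
  assumes "card S \<ge> 5"
  shows "\<exists>P\<in>radon_partitions S. radon_graph_degree S P = card S - 3"
proof -
  have card_off_T: "card (S - T) = card S - 3"
    using card_T T_subset finite_S by (simp add: card_Diff_subset card_ge_0_finite)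
  have other: "\<exists>e\<in>S - T. e \<noteq> w" for w
  proof (rule ccontr)
    assume "\<not> ?thesis"
    then have "card (S - T) \<le> card {w}"
      by (intro card_mono) auto
    with card_off_T assms show False
      by simp
  qed
  have "{w \<in> S. convex hull (toggle A w) \<inter> convex hull (S - toggle A w) \<noteq> {}} = S - T"
  proof (intro equalityI subsetI)
    fix w assume w: "w \<in> {w \<in> S. convex hull (toggle A w) \<inter> convex hull (S - toggle A w) \<noteq> {}}"
    have "toggle A w \<subseteq> S"
      using w A_subset by auto
    moreover have "toggle A w - T = A - T \<and> toggle A w \<inter> T \<noteq> A \<inter> T" if "w \<in> T"
      using that by auto
    ultimately show "w \<in> S - T"
      using w separated_if_differs_on_T by blast
  next
    fix w assume w: "w \<in> S - T"
    then obtain e where "e \<in> S - T" "e \<noteq> w"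
      using other by blast
    moreover have "toggle A w \<subseteq> S"
      using w A_subset by auto
    moreover from calculation have "toggle A w \<inter> insert e T = A \<inter> insert e T"
      using w by (auto simp: set_eq_iff)
    ultimately show "w \<in> {w \<in> S. convex hull (toggle A w) \<inter> convex hull (S - toggle A w) \<noteq> {}}"
      using w hulls_meet_if_agrees[of "toggle A w" e] by auto
  qed
  then have "radon_graph_degree S {A, S - A} = card S - 3"
    using radon_graph_degree_bipartition[OF finite_S _ A_subset] assms card_off_T by simp
  moreover obtain e where "e \<in> S - T"
    using other by blast
  then have "{A, S - A} \<in> radon_partitions S"
    using hulls_meet_if_agrees[OF A_subset] A_subset bipartition_in_radon_partitions by blast
  ultimately show ?thesis
    by blast
qed

end

lemma exists_distinct_pair_minimizing:
  fixes g :: "'a \<Rightarrow> 'a \<Rightarrow> 'b::linorder"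
  assumes "finite X" "card X \<ge> 2"
  obtains x y where "x \<in> X" "y \<in> X" "x \<noteq> y"
    "\<And>u v. u \<in> X \<Longrightarrow> v \<in> X \<Longrightarrow> u \<noteq> v \<Longrightarrow> g x y \<le> g u v"
proof -
  define pairs where "pairs = {(u, v). u \<in> X \<and> v \<in> X \<and> u \<noteq> v}"
  have "finite pairs"
    using assms(1) by (auto simp: pairs_def intro: finite_subset[of _ "X \<times> X"])
  moreover have "pairs \<noteq> {}"
    using assms card_le_Suc0_iff_eq[OF assms(1)] by (auto simp: pairs_def)
  ultimately obtain x y where "(x, y) \<in> pairs" "\<forall>p\<in>pairs. case_prod g (x, y) \<le> case_prod g p"
    using arg_min_if_finite[of pairs "case_prod g"] not_less by (metis surj_pair)
  then show thesis
    using that by (auto simp: pairs_def)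
qed

lemma exists_nearest_line_triangle:
  assumes "finite S" "general_position_2d S" "card S \<ge> 3"
  shows "\<exists>T f. triangle_config S T f"
proof -
  obtain c where inj: "inj_on (abscissa c) S"
    using exists_inj_on_abscissa[OF assms(1)] .
  have absc: "abscissa c u \<noteq> abscissa c v" if "u \<in> S" "v \<in> S" "u \<noteq> v" for u v
    using inj that inj_on_contraD by metis
  obtain l where l: "l \<in> S"
    using assms(3) by fastforce
  have "finite (S - {l})" "card (S - {l}) \<ge> 2"
    using assms(1,3) l by simp_all
  then obtain x y where "x \<in> S - {l}" "y \<in> S - {l}" "x \<noteq> y"
    and nearest: "\<And>u v. u \<in> S - {l} \<Longrightarrow> v \<in> S - {l} \<Longrightarrow> u \<noteq> v \<Longrightarrow>
      \<bar>line_height c x y l\<bar> \<le> \<bar>line_height c u v l\<bar>"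
    by (rule exists_distinct_pair_minimizing[where X = "S - {l}"
        and g = "\<lambda>u v. \<bar>line_height c u v l\<bar>"]) blast
  then have x: "x \<in> S" "x \<noteq> l" and y: "y \<in> S" "y \<noteq> l"
    by simp_all
  define f where "f v = (if v = l then line_height c x y
    else if v = x then line_height c y l else line_height c x l)" for v
  have same_side: "f v z > 0 \<longleftrightarrow> f l z > 0" if "v \<in> {l, x, y}" "z \<in> S - {l, x, y}" for v z
  proof -
    have "line_height c x y z > 0 \<longleftrightarrow> line_height c x l z > 0"
      using nearest_line_same_side[OF assms(2) inj x(1) y(1) _ l] nearest[of x z] that(2) x y \<open>x \<noteq> y\<close>
      by auto
    moreover have "line_height c y x z > 0 \<longleftrightarrow> line_height c y l z > 0"
      using nearest_line_same_side[OF assms(2) inj y(1) x(1) _ l] nearest[of y z] that(2) x y \<open>x \<noteq> y\<close>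
        line_height_commute[OF absc[OF x(1) y(1) \<open>x \<noteq> y\<close>]]
      by auto
    ultimately show ?thesis
      using that(1) line_height_commute[OF absc[OF x(1) y(1) \<open>x \<noteq> y\<close>]] by (auto simp: f_def)
  qed
  have "triangle_config S {l, x, y} f"
  proof
    show "finite S" "{l, x, y} \<subseteq> S" "card {l, x, y} = 3"
      using assms(1) l x y \<open>x \<noteq> y\<close> by auto
    show "\<exists>a b. \<forall>z. f v z = a \<bullet> z + b" if "v \<in> {l, x, y}" for v
      by (auto simp: f_def line_height_def height_over_affine)
    show "f v w = 0" if "v \<in> {l, x, y}" "w \<in> {l, x, y} - {v}" for v w
      using that absc l x y \<open>x \<noteq> y\<close> by (auto simp: f_def line_height_right)
    show "f v z \<noteq> 0" if "v \<in> {l, x, y}" "z \<in> S - ({l, x, y} - {v})" for v z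
      using that line_height_nonzero[OF assms(2) inj] l x y \<open>x \<noteq> y\<close> by (auto simp: f_def)
    show "f v z > 0 \<longleftrightarrow> f w z > 0" if "v \<in> {l, x, y}" "w \<in> {l, x, y}" "z \<in> S - {l, x, y}" for v w z
      using same_side that by blast
  qed
  then show ?thesis
    by blast
qed

theorem proposition4p2:
  fixes S :: "(real^2) set" and n :: nat
  assumes "finite S" and "card S = n" and "n > 4"
    and "general_position_2d S"
  shows "\<exists>P \<in> radon_partitions S. radon_graph_degree S P = n - 3"
proof -
  have "card S \<ge> 5"
    using assms(2,3) by simp
  then obtain T f where "triangle_config S T f"
    using exists_nearest_line_triangle[OF assms(1,4)] by fastforce
  then show ?thesis
    using triangle_config.exists_radon_partition_of_degree \<open>card S \<ge> 5\<close> assms(2) by blast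
qed

end
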